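(* Suppose a first-order method in Algorithm Class 1 is applied to instance $\mathcal P$ from $x^{(0)}=0$ and generates a sequence $\{x^{(t)}\}_{t\ge0}$, with $x^{(t)}=(x_1^{(t)\top},\dots,x_m^{(t)\top})^\top$, $x_i^{(t)}\in\mathbb R^{\bar d}$. Then for any $\bar j\in\{2,3,\dots,\bar d\}$, $\mathrm{supp}(x_i^{(t)})\subset\{1,\dots,\bar j-1\}$ for all $i=1,\dots,m$ and all integers $0\le t\le 1+m(\bar j-2)/6$.
   Context: $\mathrm{supp}(z)=\{j:[z]_j\ne0\}$. Algorithm Class 1 (for problem $\min f_0(x)+g(x)$ s.t. $Ax+b=0$): given $x^{(0)}$, for every $t\ge1$, $x^{(t)}\in\mathrm{span}\{\xi^{(t)},\mathrm{prox}_{\eta_tg}(\xi^{(t)})\}$ for some $\eta_t>0$ and some $\xi^{(t)}\in\mathrm{span}\{x^{(s)},\nabla f_0(x^{(s)}),A^\top b,A^\top Ax^{(s)}\}_{s=0}^{t-1}$, where $\mathrm{prox}_{\eta g}(x)=\arg\min_{x'}\{g(x')+\frac1{2\eta}\|x'-x\|^2\}$. Instance $\mathcal P$: fix $\epsilon\in(0,1)$, $L_f>0$, integers $m_1\ge2$, $m_2\ge1$ with $m_1m_2$ even, $m=3m_1m_2$, an odd integer $\bar d\ge5$, $d=m\bar d$. Write $x=(x_1^\top,\dots,x_m^\top)^\top$, $x_i\in\mathbb R^{\bar d}$; $[z]_j$ is the $j$-th coordinate. $J_p\in\mathbb R^{(p-1)\times p}$ has $-1$ at $(k,k)$, $1$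 at $(k,k+1)$, zero elsewhere. $\mathcal M=\{im_1:i=1,\dots,3m_2-1\}$, $\mathcal M^C=\{1,\dots,m-1\}\setminus\mathcal M$, $\bar A=mL_f(J_{\mathcal M}\otimes I_{\bar d})$, $A=mL_f(J_{\mathcal M^C}\otimes I_{\bar d})$ with $J_{\mathcal M},J_{\mathcal M^C}$ the rows of $J_m$ indexed by $\mathcal M,\mathcal M^C$; $b=0$. Choose $\beta>(50\pi+1+\|A\|)\sqrt m\,\epsilon$; $g(x)=\beta\sum_{i\in\mathcal M}\|x_i-x_{i+1}\|_1$. $\Psi(u)=0$ ($u\le0$), $1-e^{-u^2}$ ($u>0$); $\Phi(v)=4\arctan v+2\pi$. For $z\in\mathbb R^{\bar d}$: $\varphi(z,1)=-\Psi(1)\Phi([z]_1)$, $\varphi(z,j)=\Psi(-[z]_{j-1})\Phi(-[z]_j)-\Psi([z]_{j-1})\Phi([z]_j)$ ($2\le j\le\bar d$); $h_i(z)=\varphi(z,1)+3\sum_{j=1}^{\lfloor\bar d/2\rfloor}\varphi(z,2j)$ for $1\le i\le m/3$, $h_i(z)=\varphi(z,1)$ for $m/3+1\le i\le 2m/3$, $h_i(z)=\varphi(z,1)+3\sum_{j=1}^{\lfloor\bar d/2\rfloor}\varphi(z,2j+1)$ for $2m/3+1\le i\le m$. $f_i(z)=\frac{300\pi\epsilon^2}{mL_f}h_i(\frac{\sqrt mL_fz}{150\pi\epsilon})$, $f_0(x)=\sum_{i=1}^mf_i(x_i)$. Instance $\mathcal P$ is $\min_x f_0(x)+g(x)$ s.t.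 $Ax+b=0$. *)

theory Defs
  imports "HOL-Analysis.Analysis"
begin

text \<open>Vectors of R^d are represented as functions nat => real, coordinates 0..d-1
  (0-based internally), vanishing outside {..<d}.  The i-th block (i = 1..m) of x,
  as a vector of R^dbar with 1-based coordinates j = 1..dbar, is blk dbar x i.\<close>

definition vecsp :: "nat \<Rightarrow> (nat \<Rightarrow> real) set" where
  "vecsp d = {x. \<forall>k\<ge>d. x k = 0}"

definition vnorm :: "nat \<Rightarrow> (nat \<Rightarrow> real) \<Rightarrow> real" where
  "vnorm d x = sqrt (\<Sum>k<d. (x k)^2)"

definition blk :: "nat \<Rightarrow> (nat \<Rightarrow> real) \<Rightarrow> nat \<Rightarrow> nat \<Rightarrow> real" where
  "blk dbar x i = (\<lambda>j. x ((i - 1) * dbar + (j - 1)))"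

definition supp :: "nat \<Rightarrow> (nat \<Rightarrow> real) \<Rightarrow> nat set" where
  "supp n z = {j \<in> {1..n}. z j \<noteq> 0}"

definition in_span :: "(nat \<Rightarrow> real) \<Rightarrow> (nat \<Rightarrow> real) set \<Rightarrow> bool" where
  "in_span x S \<longleftrightarrow> (\<exists>c. x = (\<lambda>k. \<Sum>v\<in>S. c v * v k))"

definition grad :: "nat \<Rightarrow> ((nat \<Rightarrow> real) \<Rightarrow> real) \<Rightarrow> (nat \<Rightarrow> real) \<Rightarrow> (nat \<Rightarrow> real)" where
  "grad d f x = (\<lambda>k. if k < d then deriv (\<lambda>s. f (x(k := s))) (x k) else 0)"

definition is_prox :: "nat \<Rightarrow> real \<Rightarrow> ((nat \<Rightarrow> real) \<Rightarrow> real) \<Rightarrow> (nat \<Rightarrow> real) \<Rightarrow> (nat \<Rightarrow> real) \<Rightarrow> bool" where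
  "is_prox d eta g x p \<longleftrightarrow> p \<in> vecsp d \<and>
     (\<forall>y\<in>vecsp d. g p + (vnorm d (\<lambda>k. p k - x k))^2 / (2*eta)
                  \<le> g y + (vnorm d (\<lambda>k. y k - x k))^2 / (2*eta))"

definition Psi :: "real \<Rightarrow> real" where
  "Psi u = (if u \<le> 0 then 0 else 1 - exp (- (u^2)))"

definition Phi :: "real \<Rightarrow> real" where
  "Phi v = 4 * arctan v + 2 * pi"

definition varphi :: "(nat \<Rightarrow> real) \<Rightarrow> nat \<Rightarrow> real" where
  "varphi z j = (if j = 1 then - Psi 1 * Phi (z 1)
                 else Psi (- z (j - 1)) * Phi (- z j) - Psi (z (j - 1)) * Phi (z j))"

definition hfun :: "nat \<Rightarrow> nat \<Rightarrow> nat \<Rightarrow> (nat \<Rightarrow> real) \<Rightarrow> real" where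
  "hfun m dbar i z =
    (if 1 \<le> i \<and> i \<le> m div 3 then varphi z 1 + 3 * (\<Sum>j=1..dbar div 2. varphi z (2*j))
     else if m div 3 + 1 \<le> i \<and> i \<le> 2 * m div 3 then varphi z 1
     else varphi z 1 + 3 * (\<Sum>j=1..dbar div 2. varphi z (2*j+1)))"

definition ffun :: "real \<Rightarrow> real \<Rightarrow> nat \<Rightarrow> nat \<Rightarrow> nat \<Rightarrow> (nat \<Rightarrow> real) \<Rightarrow> real" where
  "ffun eps Lf m dbar i z =
     300 * pi * eps^2 / (real m * Lf) *
       hfun m dbar i (\<lambda>j. sqrt (real m) * Lf * z j / (150 * pi * eps))"

definition f0 :: "real \<Rightarrow> real \<Rightarrow> nat \<Rightarrow> nat \<Rightarrow> (nat \<Rightarrow> real) \<Rightarrow> real" where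
  "f0 eps Lf m dbar x = (\<Sum>i=1..m. ffun eps Lf m dbar i (blk dbar x i))"

text \<open>Index sets M and M^C (rows of J_m, 1-based).\<close>
definition Mset :: "nat \<Rightarrow> nat \<Rightarrow> nat set" where
  "Mset m1 m2 = {i * m1 | i. 1 \<le> i \<and> i \<le> 3 * m2 - 1}"

definition MCset :: "nat \<Rightarrow> nat \<Rightarrow> nat set" where
  "MCset m1 m2 = {1..3*m1*m2 - 1} - Mset m1 m2"

text \<open>J_p: (p-1) x p, entry (k,l) 1-based.\<close>
definition Jmat :: "nat \<Rightarrow> nat \<Rightarrow> real" where
  "Jmat k l = (if l = k then -1 else if l = k + 1 then 1 else 0)"

text \<open>A = m Lf (J_{M^C} \<otimes> I_dbar).  Its output is indexed by (row r \<in> M^C, coordinate j).\<close>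
definition Aop :: "real \<Rightarrow> nat \<Rightarrow> nat \<Rightarrow> nat \<Rightarrow> (nat \<Rightarrow> real) \<Rightarrow> nat \<Rightarrow> nat \<Rightarrow> real" where
  "Aop Lf m1 m2 dbar x r j =
     (let m = 3*m1*m2 in
      if r \<in> MCset m1 m2 \<and> 1 \<le> j \<and> j \<le> dbar
      then real m * Lf * (\<Sum>l=1..m. Jmat r l * blk dbar x l j) else 0)"

definition Atop :: "real \<Rightarrow> nat \<Rightarrow> nat \<Rightarrow> nat \<Rightarrow> (nat \<Rightarrow> nat \<Rightarrow> real) \<Rightarrow> nat \<Rightarrow> real" where
  "Atop Lf m1 m2 dbar y k =
     (let m = 3*m1*m2 in
      if k < m * dbar
      then real m * Lf * (\<Sum>r\<in>MCset m1 m2. Jmat r (k div dbar + 1) * y r (k mod dbar + 1))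
      else 0)"

definition Anorm :: "real \<Rightarrow> nat \<Rightarrow> nat \<Rightarrow> nat \<Rightarrow> real" where
  "Anorm Lf m1 m2 dbar =
     Sup {sqrt (\<Sum>r\<in>MCset m1 m2. \<Sum>j=1..dbar. (Aop Lf m1 m2 dbar x r j)^2) | x.
            x \<in> vecsp (3*m1*m2*dbar) \<and> vnorm (3*m1*m2*dbar) x \<le> 1}"

definition gfun :: "real \<Rightarrow> nat \<Rightarrow> nat \<Rightarrow> nat \<Rightarrow> (nat \<Rightarrow> real) \<Rightarrow> real" where
  "gfun beta m1 m2 dbar x =
     beta * (\<Sum>i\<in>Mset m1 m2. \<Sum>j=1..dbar. \<bar>blk dbar x i j - blk dbar x (i+1) j\<bar>)"

end

theory Submission
  imports Defs
begin

text \<open>Let \<open>N = m/3\<close> and give coordinate \<open>j \<ge> 2\<close> of block \<open>i\<close> the lag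
  \<open>(j - 2)(N + 1) + \<delta>\<close>, where \<open>\<delta>\<close> is the distance of block \<open>i\<close> from the first third of the
  blocks if \<open>j\<close> is even and from the last third if \<open>j\<close> is odd. We show by induction on \<open>t\<close>
  that coordinate \<open>j\<close> of block \<open>i\<close> of the \<open>t\<close>-th iterate vanishes whenever its lag is at least
  \<open>2t - 2\<close>; since the lag is at least \<open>(j - 2)(N + 1)\<close>, this gives the bound on \<open>t\<close>.

  Inside a block, \<open>\<nabla>f\<^sub>0\<close> can make coordinate \<open>j\<close> nonzero only through the term \<open>\<phi>(z, j)\<close>
  of \<open>h\<^sub>i\<close>, i.e. only from coordinate \<open>j - 1\<close> and only in the first third (even \<open>j\<close>) or
  the last third (odd \<open>j\<close>) of the blocks; as \<open>\<Psi>\<close> is flat at 0, nothing is created while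
  both coordinates vanish. Going from \<open>j - 1\<close> to \<open>j\<close> therefore means crossing the middle
  third, which costs \<open>N + 1\<close> lag. Across blocks, \<open>A\<^sup>TA\<close> only mixes blocks \<open>i, i + 1\<close> with
  \<open>i \<in> M\<^sup>C\<close>, and \<open>prox\<^sub>\<eta>\<^sub>g\<close> only mixes blocks \<open>i, i + 1\<close> with \<open>i \<in> M\<close>. So the span
  step and the prox step each lower the lag threshold by at most one.\<close>

lemma abs_Psi_le_square: "\<bar>Psi u\<bar> \<le> u\<^sup>2"
proof (cases "u \<le> 0")
  case False
  have "1 - u\<^sup>2 \<le> exp (- u\<^sup>2)"
    using exp_ge_add_one_self[of "- u\<^sup>2"] by simp
  with False show ?thesis by (simp add: Psi_def)
qed (simp add: Psi_def)

lemma Psi_has_derivative_0: "(Psi has_real_derivative 0) (at 0)"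
  unfolding has_field_derivative_iff
proof (rule Lim_null_comparison)
  show "\<forall>\<^sub>F y in at 0. norm ((Psi y - Psi 0) / (y - 0)) \<le> \<bar>y\<bar>"
  proof (rule always_eventually, intro allI)
    fix y :: real
    have "\<bar>Psi y\<bar> \<le> \<bar>y\<bar> * \<bar>y\<bar>"
      using abs_Psi_le_square[of y] by (simp add: power2_eq_square)
    then show "norm ((Psi y - Psi 0) / (y - 0)) \<le> \<bar>y\<bar>"
      by (cases "y = 0") (simp_all add: Psi_def abs_divide divide_le_eq)
  qed
  show "((\<lambda>y::real. \<bar>y\<bar>) \<longlongrightarrow> 0) (at 0)"
    using tendsto_rabs[OF tendsto_ident_at[of 0 UNIV]] by simp
qed

lemma Psi_minus_has_derivative_0: "((\<lambda>u. Psi (- u)) has_real_derivative 0) (at 0)"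
proof -
  have "(uminus has_real_derivative -1) (at (0::real))"
    using DERIV_minus[OF DERIV_ident] .
  from DERIV_chain2[OF _ this, of Psi 0] Psi_has_derivative_0 show ?thesis
    by simp
qed

lemma varphi_update_has_derivative_0:
  assumes "2 \<le> l" "2 \<le> j" "w j = 0" "l = j \<Longrightarrow> w (j - 1) = 0"
  shows "((\<lambda>u. varphi (w(j := u)) l) has_real_derivative 0) (at 0)"
proof -
  have varphi_l: "varphi z l = Psi (- z (l - 1)) * Phi (- z l) - Psi (z (l - 1)) * Phi (z l)" for z
    using assms(1) by (simp add: varphi_def)
  consider "l = j" | "l = j + 1" | "l \<noteq> j" "l - 1 \<noteq> j" by linarith
  then show ?thesis
  proof cases
    case 1
    moreover have "j - 1 \<noteq> j"
      using assms(2) by simp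
    ultimately have "(\<lambda>u. varphi (w(j := u)) l) = (\<lambda>u. 0)"
      unfolding varphi_l using assms by (simp add: Psi_def)
    then show ?thesis by simp
  next
    case 2
    then have "(\<lambda>u. varphi (w(j := u)) l) = (\<lambda>u. Psi (- u) * Phi (- w l) - Psi u * Phi (w l))"
      unfolding varphi_l by simp
    then show ?thesis
      using DERIV_diff[OF DERIV_cmult_right[OF Psi_minus_has_derivative_0]
                          DERIV_cmult_right[OF Psi_has_derivative_0]]
      by simp
  next
    case 3
    then have "(\<lambda>u. varphi (w(j := u)) l) = (\<lambda>u. varphi w l)"
      by (simp add: varphi_l)
    then show ?thesis by simp
  qed
qed

text \<open>Coordinate \<open>j\<close> of block \<open>i\<close> is chained to coordinate \<open>j - 1\<close> when \<open>h\<^sub>i\<close>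
  contains the term \<open>\<phi>(z, j)\<close>.\<close>

definition chained :: "nat \<Rightarrow> nat \<Rightarrow> nat \<Rightarrow> bool" where
  "chained m i j \<longleftrightarrow> (i \<le> m div 3 \<and> even j) \<or> (2 * m div 3 < i \<and> odd j)"

lemma hfun_update_has_derivative_0:
  assumes "1 \<le> i" "2 \<le> j" "w j = 0" "chained m i j \<Longrightarrow> w (j - 1) = 0"
  shows "((\<lambda>u. hfun m dbar i (w(j := u))) has_real_derivative 0) (at 0)"
proof -
  have varphi_1: "varphi (w(j := u)) 1 = varphi w 1" for u
    using assms(2) by (simp add: varphi_def)
  have sum_deriv: "((\<lambda>u. \<Sum>l=1..dbar div 2. varphi (w(j := u)) (2 * l + c)) has_real_derivative 0) (at 0)"
    if "c \<le> 1" and "\<And>l. 2 * l + c = j \<Longrightarrow> chained m i j" for c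
  proof -
    have "((\<lambda>u. \<Sum>l=1..dbar div 2. varphi (w(j := u)) (2 * l + c))
        has_real_derivative (\<Sum>l=1..dbar div 2. 0)) (at 0)"
      by (rule DERIV_sum, rule varphi_update_has_derivative_0) (use that assms in auto)
    then show ?thesis by simp
  qed
  consider "i \<le> m div 3" | "m div 3 + 1 \<le> i \<and> i \<le> 2 * m div 3" | "2 * m div 3 < i"
    by linarith
  then show ?thesis
  proof cases
    case 1
    then have hfun_eq: "(\<lambda>u. hfun m dbar i (w(j := u)))
        = (\<lambda>u. varphi w 1 + 3 * (\<Sum>l=1..dbar div 2. varphi (w(j := u)) (2 * l + 0)))"
      using assms(1) by (simp add: hfun_def varphi_1 del: One_nat_def)
    have "((\<lambda>u. \<Sum>l=1..dbar div 2. varphi (w(j := u)) (2 * l + 0)) has_real_derivative 0) (at 0)"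
      by (rule sum_deriv) (use 1 in \<open>auto simp: chained_def\<close>)
    from DERIV_add[OF DERIV_const DERIV_cmult[OF this, of 3]] show ?thesis
      unfolding hfun_eq by simp
  next
    case 2
    then have "(\<lambda>u. hfun m dbar i (w(j := u))) = (\<lambda>u. varphi w 1)"
      by (simp add: hfun_def varphi_1 del: One_nat_def)
    then show ?thesis by simp
  next
    case 3
    moreover have "m div 3 \<le> 2 * m div 3"
      by (simp add: div_le_mono)
    ultimately have hfun_eq: "(\<lambda>u. hfun m dbar i (w(j := u)))
        = (\<lambda>u. varphi w 1 + 3 * (\<Sum>l=1..dbar div 2. varphi (w(j := u)) (2 * l + 1)))"
      by (simp add: hfun_def varphi_1 del: One_nat_def)
    have "((\<lambda>u. \<Sum>l=1..dbar div 2. varphi (w(j := u)) (2 * l + 1)) has_real_derivative 0) (at 0)"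
      by (rule sum_deriv) (use 3 in \<open>auto simp: chained_def\<close>)
    from DERIV_add[OF DERIV_const DERIV_cmult[OF this, of 3]] show ?thesis
      unfolding hfun_eq by simp
  qed
qed

definition blk_index :: "nat \<Rightarrow> nat \<Rightarrow> nat \<Rightarrow> nat" where
  "blk_index dbar i j = (i - 1) * dbar + (j - 1)"

lemma blk_eq_index: "blk dbar x i j = x (blk_index dbar i j)"
  by (simp add: blk_def blk_index_def)

lemma blk_index_div_mod:
  assumes "1 \<le> i" "1 \<le> j" "j \<le> dbar"
  shows "blk_index dbar i j div dbar + 1 = i" and "blk_index dbar i j mod dbar + 1 = j"
proof -
  obtain a b where "i = Suc a" "j = Suc b" "b < dbar"
    using assms by (metis Suc_le_D Suc_le_lessD Suc_le_mono One_nat_def)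
  then show "blk_index dbar i j div dbar + 1 = i" "blk_index dbar i j mod dbar + 1 = j"
    by (simp_all add: blk_index_def)
qed

lemma blk_index_inj:
  assumes "1 \<le> i" "1 \<le> i'" "j \<in> {1..dbar}" "j' \<in> {1..dbar}"
    and "blk_index dbar i j = blk_index dbar i' j'"
  shows "i = i'" and "j = j'"
  using assms blk_index_div_mod[of i j dbar] blk_index_div_mod[of i' j' dbar] by auto

lemma blk_update_index:
  assumes "1 \<le> i" "1 \<le> i'" "j \<in> {1..dbar}" "j' \<in> {1..dbar}"
  shows "blk dbar (x(blk_index dbar i j := s)) i' j' = (if i' = i \<and> j' = j then s else blk dbar x i' j')"
  using blk_index_inj[OF assms(1,2,3,4)] by (auto simp: blk_eq_index)

lemma blk_index_less:
  assumes "1 \<le> i" "i \<le> m" "1 \<le> j" "j \<le> dbar"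
  shows "blk_index dbar i j < m * dbar"
proof -
  have "blk_index dbar i j < (i - 1) * dbar + dbar"
    using assms by (simp add: blk_index_def)
  also have "\<dots> = i * dbar"
    using assms(1) by (cases i) auto
  also have "\<dots> \<le> m * dbar"
    using assms(2) by simp
  finally show ?thesis .
qed

lemma hfun_cong:
  assumes "odd dbar" "\<forall>j\<in>{1..dbar}. z j = z' j"
  shows "hfun m dbar i z = hfun m dbar i z'"
proof -
  have varphi_eq: "varphi z l = varphi z' l" if "1 \<le> l" "l \<le> dbar" for l
  proof -
    have "l \<noteq> 1 \<Longrightarrow> l - 1 \<in> {1..dbar}"
      using that by auto
    then have "l \<noteq> 1 \<Longrightarrow> z (l - 1) = z' (l - 1)" "z l = z' l"
      using that assms(2) by auto
    then show ?thesis
      by (cases "l = 1") (simp_all add: varphi_def)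
  qed
  have bound: "2 * l + c \<le> dbar" if "l \<le> dbar div 2" "c \<le> 1" for l c
    using that assms(1) odd_two_times_div_two_succ[of dbar] by linarith
  have "(\<Sum>l=1..dbar div 2. varphi z (2 * l)) = (\<Sum>l=1..dbar div 2. varphi z' (2 * l))"
    using bound[of _ 0] by (intro sum.cong refl varphi_eq) auto
  moreover have "(\<Sum>l=1..dbar div 2. varphi z (2 * l + 1)) = (\<Sum>l=1..dbar div 2. varphi z' (2 * l + 1))"
    using bound[of _ 1] by (intro sum.cong refl varphi_eq) auto
  moreover have "varphi z 1 = varphi z' 1"
    using varphi_eq[of 1] odd_pos[OF assms(1)] by simp
  ultimately show ?thesis
    unfolding hfun_def by simp
qed

lemma f0_update_blk:
  assumes "1 \<le> i" "i \<le> m" "1 \<le> j" "j \<le> dbar" "odd dbar"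
  shows "f0 eps Lf m dbar (x(blk_index dbar i j := s))
    = (\<Sum>i'\<in>{1..m} - {i}. ffun eps Lf m dbar i' (blk dbar x i'))
      + ffun eps Lf m dbar i ((blk dbar x i)(j := s))"
proof -
  let ?x = "x(blk_index dbar i j := s)"
  have "ffun eps Lf m dbar i' (blk dbar ?x i') = ffun eps Lf m dbar i' (blk dbar x i')"
    if "i' \<in> {1..m} - {i}" for i'
    unfolding ffun_def using that assms
    by (intro arg_cong[where f = "\<lambda>c. _ * c"] hfun_cong) (auto simp: blk_update_index)
  moreover have "ffun eps Lf m dbar i (blk dbar ?x i) = ffun eps Lf m dbar i ((blk dbar x i)(j := s))"
    unfolding ffun_def using assms
    by (intro arg_cong[where f = "\<lambda>c. _ * c"] hfun_cong) (auto simp: blk_update_index)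
  moreover have "f0 eps Lf m dbar ?x = ffun eps Lf m dbar i (blk dbar ?x i)
      + (\<Sum>i'\<in>{1..m} - {i}. ffun eps Lf m dbar i' (blk dbar ?x i'))"
    unfolding f0_def using assms(1,2) by (simp add: sum.remove)
  ultimately show ?thesis
    by simp
qed

lemma grad_f0_blk_eq_0:
  assumes "1 \<le> i" "i \<le> m" "2 \<le> j" "j \<le> dbar" "odd dbar" "blk dbar x i j = 0"
    and "chained m i j \<Longrightarrow> blk dbar x i (j - 1) = 0"
  shows "blk dbar (grad (m * dbar) (f0 eps Lf m dbar) x) i j = 0"
proof -
  define k where "k = blk_index dbar i j"
  define K where "K = 300 * pi * eps\<^sup>2 / (real m * Lf)"
  define c where "c = sqrt (real m) * Lf / (150 * pi * eps)"
  define w where "w = (\<lambda>j'. c * blk dbar x i j')"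
  have j_pos: "1 \<le> j"
    using assms(3) by simp
  have ffun_eq: "ffun eps Lf m dbar i ((blk dbar x i)(j := s))
      = K * hfun m dbar i (w(j := c * s))" for s
  proof -
    have "(\<lambda>j'. sqrt (real m) * Lf * ((blk dbar x i)(j := s)) j' / (150 * pi * eps)) = w(j := c * s)"
      by (auto simp: w_def c_def)
    then show ?thesis
      unfolding ffun_def K_def by simp
  qed
  have "((\<lambda>u. hfun m dbar i (w(j := u))) has_real_derivative 0) (at (c * 0))"
    using hfun_update_has_derivative_0[of i j w m dbar] assms by (simp add: w_def)
  from DERIV_chain2[OF this DERIV_cmult[OF DERIV_ident, of c]]
  have "((\<lambda>s. hfun m dbar i (w(j := c * s))) has_real_derivative 0) (at 0)"
    by simp
  from DERIV_add[OF DERIV_const DERIV_cmult[OF this]]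
  have "((\<lambda>s. f0 eps Lf m dbar (x(k := s))) has_real_derivative 0) (at 0)"
    unfolding k_def f0_update_blk[OF assms(1,2) j_pos assms(4,5)] ffun_eq
    by simp
  moreover have "k < m * dbar" "x k = 0"
    using blk_index_less[of i m j dbar] assms by (simp_all add: k_def blk_eq_index)
  ultimately show ?thesis
    by (simp add: blk_eq_index grad_def k_def[symmetric] DERIV_imp_deriv)
qed

lemma Mset_bounds:
  assumes "a \<in> Mset m1 m2" "1 \<le> m1"
  shows "1 \<le> a" and "a + 1 \<le> 3 * m1 * m2"
proof -
  obtain i where i: "a = i * m1" "1 \<le> i" "i \<le> 3 * m2 - 1"
    using assms(1) by (auto simp: Mset_def)
  then show "1 \<le> a"
    using assms(2) by simp
  have "a + 1 \<le> (i + 1) * m1"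
    using i(1) assms(2) by simp
  also have "\<dots> \<le> 3 * m2 * m1"
    using i(2,3) by (intro mult_le_mono1) linarith
  also have "\<dots> = 3 * m1 * m2"
    by simp
  finally show "a + 1 \<le> 3 * m1 * m2" .
qed

lemma Suc_notin_Mset:
  assumes "a \<in> Mset m1 m2" "2 \<le> m1"
  shows "a + 1 \<notin> Mset m1 m2"
proof
  assume "a + 1 \<in> Mset m1 m2"
  with assms(1) obtain i i' where "i * m1 + 1 = i' * m1"
    by (auto simp: Mset_def)
  then have "m1 dvd 1"
    by (metis dvd_add_right_iff dvd_triv_right)
  with assms(2) show False
    by simp
qed

lemma MCset_bounds: "r \<in> MCset m1 m2 \<Longrightarrow> 1 \<le> r \<and> r + 1 \<le> 3 * m1 * m2"
  by (auto simp: MCset_def)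

lemma Aop_eq_0:
  assumes "r \<in> MCset m1 m2 \<Longrightarrow> blk dbar x r j = 0 \<and> blk dbar x (r + 1) j = 0"
  shows "Aop Lf m1 m2 dbar x r j = 0"
proof -
  have "(\<Sum>l=1..3 * m1 * m2. Jmat r l * blk dbar x l j) = 0" if "r \<in> MCset m1 m2"
    using assms that by (intro sum.neutral) (auto simp: Jmat_def)
  then show ?thesis
    by (simp add: Aop_def Let_def)
qed

lemma Aop_zero: "Aop Lf m1 m2 dbar (\<lambda>k. 0) = (\<lambda>r j. 0)"
  by (auto intro!: Aop_eq_0 simp: blk_def fun_eq_iff)

lemma Atop_blk_eq_0:
  assumes "1 \<le> i" "i \<le> 3 * m1 * m2" "1 \<le> j" "j \<le> dbar"
    and "\<And>r. r \<in> MCset m1 m2 \<Longrightarrow> r = i \<or> r + 1 = i \<Longrightarrow> y r j = 0"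
  shows "blk dbar (Atop Lf m1 m2 dbar y) i j = 0"
proof -
  have "(\<Sum>r\<in>MCset m1 m2. Jmat r i * y r j) = 0"
    using assms(5) by (intro sum.neutral) (auto simp: Jmat_def)
  then show ?thesis
    using blk_index_less[OF assms(1-4)] blk_index_div_mod[OF assms(1,3,4)]
    by (simp add: blk_eq_index Atop_def Let_def)
qed

lemma Atop_zero: "Atop Lf m1 m2 dbar (\<lambda>r j. 0) = (\<lambda>k. 0)"
  by (simp add: Atop_def Let_def fun_eq_iff)

lemma gfun_le_of_zeroing:
  assumes "0 \<le> beta" "1 \<le> m1"
    and closed: "\<And>a j. a \<in> Mset m1 m2 \<Longrightarrow> P a j = P (a + 1) j"
    and y: "\<And>a j. 1 \<le> a \<Longrightarrow> a \<le> 3 * m1 * m2 \<Longrightarrow> j \<in> {1..dbar}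
              \<Longrightarrow> blk dbar y a j = (if P a j then 0 else blk dbar x a j)"
  shows "gfun beta m1 m2 dbar y \<le> gfun beta m1 m2 dbar x"
  unfolding gfun_def
proof (intro mult_left_mono sum_mono)
  fix a j
  assume "a \<in> Mset m1 m2" "j \<in> {1..dbar}"
  then show "\<bar>blk dbar y a j - blk dbar y (a + 1) j\<bar> \<le> \<bar>blk dbar x a j - blk dbar x (a + 1) j\<bar>"
    using y[of a j] y[of "a + 1" j] closed[of a j] Mset_bounds[of a m1 m2] assms(2) by auto
qed (fact assms(1))

lemma sum_square_vnorm: "(vnorm d v)\<^sup>2 = (\<Sum>k<d. (v k)\<^sup>2)"
  unfolding vnorm_def by (simp add: sum_nonneg)

text \<open>Zeroing the coordinates of \<open>p\<close> indexed by \<open>P\<close> does not increase \<open>g\<close>, since \<open>P\<close> never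
  separates the two blocks of a difference in \<open>g\<close>, and it brings \<open>p\<close> strictly closer to
  \<open>\<xi>\<close>, which vanishes there, unless those coordinates of \<open>p\<close> already vanish.\<close>

lemma prox_gfun_blk_eq_0:
  assumes prox: "is_prox (3 * m1 * m2 * dbar) eta (gfun beta m1 m2 dbar) xi p"
    and "0 < eta" "0 \<le> beta" "1 \<le> m1"
    and closed: "\<And>a j. a \<in> Mset m1 m2 \<Longrightarrow> P a j = P (a + 1) j"
    and xi: "\<And>a j. 1 \<le> a \<Longrightarrow> a \<le> 3 * m1 * m2 \<Longrightarrow> j \<in> {1..dbar} \<Longrightarrow> P a j
              \<Longrightarrow> blk dbar xi a j = 0"
    and ij: "1 \<le> i" "i \<le> 3 * m1 * m2" "j \<in> {1..dbar}" "P i j"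
  shows "blk dbar p i j = 0"
proof (rule ccontr)
  assume p_ij: "blk dbar p i j \<noteq> 0"
  define d where "d = 3 * m1 * m2 * dbar"
  define Q where "Q = {blk_index dbar a j' | a j'. 1 \<le> a \<and> a \<le> 3 * m1 * m2 \<and> j' \<in> {1..dbar} \<and> P a j'}"
  define y where "y = (\<lambda>k. if k \<in> Q then 0 else p k)"
  have p: "p \<in> vecsp d" "\<And>z. z \<in> vecsp d \<Longrightarrow> gfun beta m1 m2 dbar p + (vnorm d (\<lambda>k. p k - xi k))\<^sup>2 / (2 * eta)
      \<le> gfun beta m1 m2 dbar z + (vnorm d (\<lambda>k. z k - xi k))\<^sup>2 / (2 * eta)"
    using prox unfolding is_prox_def d_def by auto
  have "y \<in> vecsp d"
    using p(1) unfolding vecsp_def y_def by auto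
  have "blk dbar y a j' = (if P a j' then 0 else blk dbar p a j')"
    if "1 \<le> a" "a \<le> 3 * m1 * m2" "j' \<in> {1..dbar}" for a j'
    using that blk_index_inj[OF that(1) _ that(3)] unfolding y_def Q_def
    by (auto simp: blk_eq_index)
  then have "gfun beta m1 m2 dbar y \<le> gfun beta m1 m2 dbar p"
    using gfun_le_of_zeroing[of beta m1 m2 P dbar y p] assms(3,4) closed by blast
  have xi_Q: "xi k = 0" if "k \<in> Q" for k
    using that xi unfolding Q_def by (auto simp: blk_eq_index)
  have k0: "blk_index dbar i j \<in> Q" "blk_index dbar i j < d"
    using ij blk_index_less[of i "3 * m1 * m2" j dbar] unfolding Q_def d_def by auto
  have "(\<Sum>k<d. (y k - xi k)\<^sup>2) < (\<Sum>k<d. (p k - xi k)\<^sup>2)"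
  proof (rule sum_strict_mono_ex1)
    show "\<forall>k\<in>{..<d}. (y k - xi k)\<^sup>2 \<le> (p k - xi k)\<^sup>2"
      using xi_Q by (simp add: y_def)
    show "\<exists>k\<in>{..<d}. (y k - xi k)\<^sup>2 < (p k - xi k)\<^sup>2"
      using k0 xi_Q p_ij by (auto simp: y_def blk_eq_index)
  qed simp
  then have "(vnorm d (\<lambda>k. y k - xi k))\<^sup>2 / (2 * eta) < (vnorm d (\<lambda>k. p k - xi k))\<^sup>2 / (2 * eta)"
    using assms(2) by (simp add: sum_square_vnorm divide_strict_right_mono)
  with p(2)[OF \<open>y \<in> vecsp d\<close>] \<open>gfun beta m1 m2 dbar y \<le> gfun beta m1 m2 dbar p\<close> show False
    by linarith
qed

lemma abs_le_vnorm: "k < d \<Longrightarrow> \<bar>x k\<bar> \<le> vnorm d x"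
  unfolding vnorm_def by (rule real_le_rsqrt) (auto intro: member_le_sum)

text \<open>A crude bound, needed only because \<open>Sup\<close> of an unbounded set of reals is unspecified.\<close>

lemma abs_Aop_le:
  assumes "vnorm (3 * m1 * m2 * dbar) x \<le> 1"
  shows "\<bar>Aop Lf m1 m2 dbar x r j\<bar> \<le> real (3 * m1 * m2) * \<bar>Lf\<bar> * real (3 * m1 * m2)"
proof (cases "r \<in> MCset m1 m2 \<and> 1 \<le> j \<and> j \<le> dbar")
  case True
  have "\<bar>Jmat r l * blk dbar x l j\<bar> \<le> 1" if "l \<in> {1..3 * m1 * m2}" for l
  proof -
    have "\<bar>blk dbar x l j\<bar> \<le> 1"
      using abs_le_vnorm[OF blk_index_less, of l "3 * m1 * m2" j dbar x] that True assms
      by (simp add: blk_eq_index)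
    moreover have "\<bar>Jmat r l\<bar> \<le> 1"
      by (simp add: Jmat_def)
    ultimately show ?thesis
      by (simp add: abs_mult mult_le_one)
  qed
  then have "\<bar>\<Sum>l=1..3 * m1 * m2. Jmat r l * blk dbar x l j\<bar> \<le> (\<Sum>l=1..3 * m1 * m2. 1)"
    by (intro order.trans[OF sum_abs] sum_mono)
  then have "\<bar>\<Sum>l=1..3 * m1 * m2. Jmat r l * blk dbar x l j\<bar> \<le> real (3 * m1 * m2)"
    by simp
  then have "real (3 * m1 * m2) * \<bar>Lf\<bar> * \<bar>\<Sum>l=1..3 * m1 * m2. Jmat r l * blk dbar x l j\<bar>
      \<le> real (3 * m1 * m2) * \<bar>Lf\<bar> * real (3 * m1 * m2)"
    by (intro mult_left_mono) auto
  then show ?thesis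
    using True by (simp add: Aop_def Let_def abs_mult)
qed (auto simp: Aop_def Let_def)

lemma Anorm_nonneg: "0 \<le> Anorm Lf m1 m2 dbar"
proof -
  define S where "S = {sqrt (\<Sum>r\<in>MCset m1 m2. \<Sum>j=1..dbar. (Aop Lf m1 m2 dbar x r j)\<^sup>2) | x.
    x \<in> vecsp (3 * m1 * m2 * dbar) \<and> vnorm (3 * m1 * m2 * dbar) x \<le> 1}"
  define B where "B = real (3 * m1 * m2) * \<bar>Lf\<bar> * real (3 * m1 * m2)"
  have "0 = sqrt (\<Sum>r\<in>MCset m1 m2. \<Sum>j=1..dbar. (Aop Lf m1 m2 dbar (\<lambda>k. 0) r j)\<^sup>2)
      \<and> (\<lambda>k. 0) \<in> vecsp (3 * m1 * m2 * dbar) \<and> vnorm (3 * m1 * m2 * dbar) (\<lambda>k. 0) \<le> 1"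
    by (simp add: Aop_zero vecsp_def vnorm_def)
  then have "0 \<in> S"
    unfolding S_def by blast
  moreover have "bdd_above S"
  proof (rule bdd_aboveI)
    fix s
    assume "s \<in> S"
    then obtain x where x: "s = sqrt (\<Sum>r\<in>MCset m1 m2. \<Sum>j=1..dbar. (Aop Lf m1 m2 dbar x r j)\<^sup>2)"
      "vnorm (3 * m1 * m2 * dbar) x \<le> 1"
      unfolding S_def by auto
    have "(Aop Lf m1 m2 dbar x r j)\<^sup>2 \<le> B\<^sup>2" for r j
      using abs_Aop_le[OF x(2), of Lf r j] unfolding B_def
      by (metis abs_ge_zero power2_abs power_mono)
    then show "s \<le> sqrt (\<Sum>r\<in>MCset m1 m2. \<Sum>j=1..dbar. B\<^sup>2)"
      unfolding x(1) by (intro real_sqrt_le_mono sum_mono)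
  qed
  ultimately show ?thesis
    unfolding Anorm_def S_def[symmetric] by (rule cSup_upper)
qed

definition lag :: "nat \<Rightarrow> nat \<Rightarrow> nat \<Rightarrow> int" where
  "lag N i j = (int j - 2) * (int N + 1)
     + (if even j then max 0 (int i - int N) else max 0 (2 * int N + 1 - int i))"

lemma lag_adjacent: "i' \<le> i + 1 \<Longrightarrow> i \<le> i' + 1 \<Longrightarrow> lag N i j - 1 \<le> lag N i' j"
  unfolding lag_def by auto

lemma lag_chained:
  assumes "3 \<le> j" "chained (3 * N) i j"
  shows "lag N i j \<le> lag N i (j - 1)"
proof -
  have "int (j - 1) = int j - 1"
    using assms(1) by simp
  moreover have "(i \<le> N \<and> even j \<and> odd (j - 1)) \<or> (2 * N < i \<and> odd j \<and> even (j - 1))"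
    using assms by (auto simp: chained_def)
  ultimately show ?thesis
    unfolding lag_def by (auto simp: algebra_simps)
qed

lemma lag_chained_2: "chained (3 * N) i 2 \<Longrightarrow> lag N i 2 = 0"
  by (simp add: chained_def lag_def)

lemma lag_lower: "2 \<le> j \<Longrightarrow> (int j - 2) * (int N + 1) \<le> lag N i j"
  unfolding lag_def by auto

definition vanishes_beyond :: "nat \<Rightarrow> nat \<Rightarrow> int \<Rightarrow> (nat \<Rightarrow> real) \<Rightarrow> bool" where
  "vanishes_beyond N dbar n x \<longleftrightarrow>
     (\<forall>i\<in>{1..3 * N}. \<forall>j\<in>{2..dbar}. n \<le> lag N i j \<longrightarrow> blk dbar x i j = 0)"

lemma vanishes_beyond_mono:
  "vanishes_beyond N dbar n x \<Longrightarrow> n \<le> n' \<Longrightarrow> vanishes_beyond N dbar n' x"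
  unfolding vanishes_beyond_def by force

lemma vanishes_beyond_zero: "vanishes_beyond N dbar n (\<lambda>k. 0)"
  by (simp add: vanishes_beyond_def blk_def)

lemma in_span_vanishes_beyond:
  assumes "in_span x S" "\<forall>v\<in>S. vanishes_beyond N dbar n v"
  shows "vanishes_beyond N dbar n x"
  using assms unfolding vanishes_beyond_def in_span_def blk_eq_index
  by (auto intro: sum.neutral)

lemma grad_f0_vanishes_beyond:
  assumes "odd dbar" "0 \<le> n" "vanishes_beyond N dbar n x"
  shows "vanishes_beyond N dbar (n + 1) (grad (3 * N * dbar) (f0 eps Lf (3 * N) dbar) x)"
  unfolding vanishes_beyond_def
proof (intro ballI impI)
  fix i j
  assume i: "i \<in> {1..3 * N}" and j: "j \<in> {2..dbar}" and lag_ij: "n + 1 \<le> lag N i j"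
  have "blk dbar x i (j - 1) = 0" if "chained (3 * N) i j"
  proof -
    have "j \<noteq> 2"
      using that lag_ij lag_chained_2 assms(2) by force
    then have "j - 1 \<in> {2..dbar}" "lag N i j \<le> lag N i (j - 1)"
      using j that lag_chained by auto
    then show ?thesis
      using assms(3) i lag_ij unfolding vanishes_beyond_def by auto
  qed
  moreover have "blk dbar x i j = 0"
    using assms(3) i j lag_ij unfolding vanishes_beyond_def by auto
  ultimately show "blk dbar (grad (3 * N * dbar) (f0 eps Lf (3 * N) dbar) x) i j = 0"
    using i j assms(1) by (intro grad_f0_blk_eq_0) auto
qed

lemma grad_f0_zero_vanishes_beyond:
  "odd dbar \<Longrightarrow> vanishes_beyond N dbar n (grad (3 * N * dbar) (f0 eps Lf (3 * N) dbar) (\<lambda>k. 0))"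
  unfolding vanishes_beyond_def by (intro ballI impI grad_f0_blk_eq_0) (auto simp: blk_def)

lemma Atop_Aop_vanishes_beyond:
  assumes "vanishes_beyond (m1 * m2) dbar n x"
  shows "vanishes_beyond (m1 * m2) dbar (n + 1) (Atop Lf m1 m2 dbar (Aop Lf m1 m2 dbar x))"
  unfolding vanishes_beyond_def
proof (intro ballI impI)
  fix i j
  assume i: "i \<in> {1..3 * (m1 * m2)}" and j: "j \<in> {2..dbar}"
    and lag_ij: "n + 1 \<le> lag (m1 * m2) i j"
  have "Aop Lf m1 m2 dbar x r j = 0" if "r \<in> MCset m1 m2" "r = i \<or> r + 1 = i" for r
  proof (rule Aop_eq_0)
    have "n \<le> lag (m1 * m2) r j" "n \<le> lag (m1 * m2) (r + 1) j"
      using lag_adjacent[of r i "m1 * m2" j] lag_adjacent[of "r + 1" i "m1 * m2" j] that(2) lag_ij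
      by auto
    then show "blk dbar x r j = 0 \<and> blk dbar x (r + 1) j = 0"
      using assms j MCset_bounds[OF that(1)] unfolding vanishes_beyond_def by auto
  qed
  then show "blk dbar (Atop Lf m1 m2 dbar (Aop Lf m1 m2 dbar x)) i j = 0"
    using i j by (intro Atop_blk_eq_0) auto
qed

lemma prox_vanishes_beyond:
  assumes "is_prox (3 * m1 * m2 * dbar) eta (gfun beta m1 m2 dbar) xi p"
    and "0 < eta" "0 \<le> beta" "2 \<le> m1"
    and xi: "vanishes_beyond (m1 * m2) dbar n xi"
  shows "vanishes_beyond (m1 * m2) dbar (n + 1) p"
  unfolding vanishes_beyond_def
proof (intro ballI impI)
  fix i j
  assume i: "i \<in> {1..3 * (m1 * m2)}" and j: "j \<in> {2..dbar}"
    and lag_ij: "n + 1 \<le> lag (m1 * m2) i j"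
  \<comment> \<open>\<open>G a\<close> is the first block of the pair \<open>{b, b + 1}\<close>, \<open>b \<in> M\<close>, containing \<open>a\<close> (or \<open>a\<close> itself).\<close>
  define G where "G a = (if a - 1 \<in> Mset m1 m2 then a - 1 else a)" for a
  define P where "P a j \<longleftrightarrow> 2 \<le> j \<and> n \<le> lag (m1 * m2) (G a) j \<and> n \<le> lag (m1 * m2) (G a + 1) j"
    for a j
  have "0 \<notin> Mset m1 m2"
    using assms(4) by (auto simp: Mset_def)
  then have G: "G a = a \<or> (G a = a - 1 \<and> 2 \<le> a)" if "1 \<le> a" for a
    using that unfolding G_def by (cases "a = 1") auto
  show "blk dbar p i j = 0"
  proof (rule prox_gfun_blk_eq_0[where P = P, OF assms(1-3)])
    fix a j'
    assume a: "a \<in> Mset m1 m2"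
    have "a - 1 \<notin> Mset m1 m2"
      using Suc_notin_Mset[of "a - 1" m1 m2] Mset_bounds(1)[OF a] a assms(4) by auto
    then have "G a = a" "G (a + 1) = a"
      using Suc_notin_Mset[OF a assms(4)] a unfolding G_def by auto
    then show "P a j' = P (a + 1) j'"
      unfolding P_def by simp
  next
    fix a j'
    assume a: "1 \<le> a" "a \<le> 3 * m1 * m2" and "j' \<in> {1..dbar}" "P a j'"
    moreover have "a = G a \<or> a = G a + 1"
      using G[OF a(1)] by auto
    ultimately have "a \<in> {1..3 * (m1 * m2)}" "j' \<in> {2..dbar}" "n \<le> lag (m1 * m2) a j'"
      unfolding P_def by (auto simp: mult.assoc)
    then show "blk dbar xi a j' = 0"
      using xi unfolding vanishes_beyond_def by blast
  next
    have "G i \<le> i + 1" "i \<le> G i + 1" "G i + 1 \<le> i + 1" "i \<le> G i + 1 + 1"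
      using G[of i] i by auto
    then have "n \<le> lag (m1 * m2) (G i) j" "n \<le> lag (m1 * m2) (G i + 1) j"
      using lag_adjacent[of "G i" i "m1 * m2" j] lag_adjacent[of "G i + 1" i "m1 * m2" j] lag_ij
      by linarith+
    then show "P i j"
      using j unfolding P_def by simp
  qed (use assms(4) i j in \<open>simp_all add: mult.assoc\<close>)
qed

lemma supp_blk_subset_of_vanishes_beyond:
  assumes "vanishes_beyond N dbar n x" "n \<le> (int jbar - 2) * (int N + 1)" "2 \<le> jbar" "i \<in> {1..3 * N}"
  shows "supp dbar (blk dbar x i) \<subseteq> {1..jbar - 1}"
proof
  fix j
  assume j: "j \<in> supp dbar (blk dbar x i)"
  show "j \<in> {1..jbar - 1}"
  proof (rule ccontr)
    assume "j \<notin> {1..jbar - 1}"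
    with j assms(3) have "jbar \<le> j" "j \<in> {2..dbar}"
      by (auto simp: supp_def)
    then have "(int jbar - 2) * (int N + 1) \<le> (int j - 2) * (int N + 1)"
      by (intro mult_right_mono) auto
    moreover have "(int j - 2) * (int N + 1) \<le> lag N i j"
      using lag_lower \<open>j \<in> {2..dbar}\<close> by simp
    ultimately have "n \<le> lag N i j"
      using assms(2) by linarith
    with assms(1,4) \<open>j \<in> {2..dbar}\<close> j show False
      by (auto simp: vanishes_beyond_def supp_def)
  qed
qed

lemma iterate_vanishes_beyond:
  assumes "odd dbar" "2 \<le> m1" "0 \<le> beta" "xs 0 = (\<lambda>k. 0)"
    and earlier: "\<forall>s<t. vanishes_beyond (m1 * m2) dbar (2 * int s - 2) (xs s)"
    and step: "\<exists>eta xi p. eta > 0 \<and>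
           in_span xi (\<Union>s<t. {xs s, grad (3 * m1 * m2 * dbar) (f0 eps Lf (3 * m1 * m2) dbar) (xs s),
                              Atop Lf m1 m2 dbar (\<lambda>r j. 0),
                              Atop Lf m1 m2 dbar (Aop Lf m1 m2 dbar (xs s))}) \<and>
           is_prox (3 * m1 * m2 * dbar) eta (gfun beta m1 m2 dbar) xi p \<and>
           in_span (xs t) {xi, p}"
      (is "\<exists>eta xi p. _ \<and> in_span xi ?directions \<and> _")
  shows "vanishes_beyond (m1 * m2) dbar (2 * int t - 2) (xs t)"
proof -
  from step obtain eta xi p where "0 < eta" and xi: "in_span xi ?directions"
    and prox: "is_prox (3 * m1 * m2 * dbar) eta (gfun beta m1 m2 dbar) xi p" and "in_span (xs t) {xi, p}"
    by blast
  let ?N = "m1 * m2"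
  let ?grad = "grad (3 * ?N * dbar) (f0 eps Lf (3 * ?N) dbar)"
  have grad_eq: "grad (3 * m1 * m2 * dbar) (f0 eps Lf (3 * m1 * m2) dbar) = ?grad"
    by (simp add: mult.assoc)
  have "vanishes_beyond ?N dbar (2 * int s - 1) v"
    if "s < t" "v \<in> {xs s, ?grad (xs s), Atop Lf m1 m2 dbar (\<lambda>r j. 0),
                      Atop Lf m1 m2 dbar (Aop Lf m1 m2 dbar (xs s))}" for s v
  proof (cases "s = 0")
    case True
    then show ?thesis
      using that(2) assms(4) grad_f0_zero_vanishes_beyond[OF assms(1)]
      by (auto simp: Aop_zero Atop_zero vanishes_beyond_zero)
  next
    case False
    then have base: "vanishes_beyond ?N dbar (2 * int s - 2) (xs s)" and "0 \<le> 2 * int s - 2"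
      using earlier that(1) by auto
    have "vanishes_beyond ?N dbar (2 * int s - 1) (?grad (xs s))"
      using grad_f0_vanishes_beyond[OF assms(1) \<open>0 \<le> 2 * int s - 2\<close> base] by simp
    moreover have "vanishes_beyond ?N dbar (2 * int s - 1) (Atop Lf m1 m2 dbar (Aop Lf m1 m2 dbar (xs s)))"
      using Atop_Aop_vanishes_beyond[OF base] by simp
    moreover have "vanishes_beyond ?N dbar (2 * int s - 1) (xs s)"
      using vanishes_beyond_mono[OF base] by simp
    ultimately show ?thesis
      using that(2) by (auto simp: Atop_zero vanishes_beyond_zero)
  qed
  then have "vanishes_beyond ?N dbar (2 * int t - 3) xi"
    using xi unfolding grad_eq
    by (intro in_span_vanishes_beyond) (force intro: vanishes_beyond_mono)+
  from prox_vanishes_beyond[OF prox \<open>0 < eta\<close> assms(3,2) this]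
  have "vanishes_beyond ?N dbar (2 * int t - 2) p"
    by simp
  moreover have "vanishes_beyond ?N dbar (2 * int t - 2) xi"
    using vanishes_beyond_mono[OF \<open>vanishes_beyond ?N dbar (2 * int t - 3) xi\<close>] by simp
  ultimately show ?thesis
    using in_span_vanishes_beyond[OF \<open>in_span (xs t) {xi, p}\<close>] by blast
qed

theorem proposition3:
  fixes eps Lf beta :: real and m1 m2 dbar :: nat
    and xs :: "nat \<Rightarrow> nat \<Rightarrow> real"
  assumes "0 < eps" "eps < 1" "0 < Lf"
    and "m1 \<ge> 2" "m2 \<ge> 1" "even (m1 * m2)"
    and "odd dbar" "dbar \<ge> 5"
    and "beta > (50 * pi + 1 + Anorm Lf m1 m2 dbar) * sqrt (real (3*m1*m2)) * eps"
    and "xs 0 = (\<lambda>k. 0)"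
    and "\<forall>t\<ge>1. \<exists>eta xi p. eta > 0 \<and>
           in_span xi (\<Union>s<t. {xs s, grad (3*m1*m2*dbar) (f0 eps Lf (3*m1*m2) dbar) (xs s),
                              Atop Lf m1 m2 dbar (\<lambda>r j. 0),
                              Atop Lf m1 m2 dbar (Aop Lf m1 m2 dbar (xs s))}) \<and>
           is_prox (3*m1*m2*dbar) eta (gfun beta m1 m2 dbar) xi p \<and>
           in_span (xs t) {xi, p}"
  shows "\<forall>jbar\<in>{2..dbar}. \<forall>t. real t \<le> 1 + real (3*m1*m2) * (real jbar - 2) / 6 \<longrightarrow>
           (\<forall>i\<in>{1..3*m1*m2}. supp dbar (blk dbar (xs t) i) \<subseteq> {1..jbar - 1})"
proof -
  have "0 \<le> (50 * pi + 1 + Anorm Lf m1 m2 dbar) * sqrt (real (3*m1*m2)) * eps"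
    using assms(1) Anorm_nonneg[of Lf m1 m2 dbar] pi_gt_zero by (intro mult_nonneg_nonneg) auto
  with assms(9) have "0 \<le> beta"
    by linarith
  have vanish: "vanishes_beyond (m1 * m2) dbar (2 * int t - 2) (xs t)" for t
  proof (induction t rule: less_induct)
    case (less t)
    then show ?case
      using assms(10,11) vanishes_beyond_zero
        iterate_vanishes_beyond[where xs = xs and eps = eps and Lf = Lf,
          OF assms(7,4) \<open>0 \<le> beta\<close> assms(10)]
      by (cases "t = 0") auto
  qed
  show ?thesis
  proof (intro ballI allI impI)
    fix jbar t i
    assume "jbar \<in> {2..dbar}" "real t \<le> 1 + real (3*m1*m2) * (real jbar - 2) / 6" "i \<in> {1..3*m1*m2}"
    moreover from this
    have "real_of_int (2 * int t - 2) \<le> real_of_int ((int jbar - 2) * (int (m1 * m2) + 1))"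
      by (simp add: field_simps)
    then have "2 * int t - 2 \<le> (int jbar - 2) * (int (m1 * m2) + 1)"
      by (simp only: of_int_le_iff)
    ultimately show "supp dbar (blk dbar (xs t) i) \<subseteq> {1..jbar - 1}"
      by (intro supp_blk_subset_of_vanishes_beyond[OF vanish]) (auto simp: mult.assoc)
  qed
qed

end
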